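(* Let $n \geq 3$. If $H$ is a bi-orderable subgroup of $B_n(D)$ such that $P_n(D) \subset H \subset B_n(D)$, then $H = P_n(D)$. In other words, $P_n(D)$ is a maximal bi-orderable subgroup of $B_n(D)$; equivalently, every subgroup $H$ with $P_n(D) \subsetneq H \subset B_n(D)$ is not bi-orderable.
   Context: $D$ denotes the closed disk. $B_n(D)$ is the Artin braid group on $n$ strands, i.e. the group with generators $\sigma_1,\dots,\sigma_{n-1}$ and relations $\sigma_i\sigma_j=\sigma_j\sigma_i$ for $|i-j|\ge 2$ and $\sigma_i\sigma_{i+1}\sigma_i=\sigma_{i+1}\sigma_i\sigma_{i+1}$ for $1\le i\le n-2$. The permutation homomorphism $\pi: B_n(D)\to S_n$ is determined by $\pi(\sigma_i)=(i,i+1)$, and the pure braid group is $P_n(D)=\ker \pi$. A group is bi-orderable if it admits a strict total ordering $<$ such that $x<y$ implies $gx<gy$ and $xg<yg$ for all $x,y,g$. *)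

theory Defs
  imports "HOL-Algebra.Group" "HOL-Combinatorics.Transposition"
begin

text \<open>Braid words: a letter (i, True) is sigma_i, (i, False) is sigma_i^{-1}.\<close>
type_synonym bword = "(nat \<times> bool) list"

definition valid_bword :: "nat \<Rightarrow> bword \<Rightarrow> bool" where
  "valid_bword n w \<longleftrightarrow> (\<forall>(i, e) \<in> set w. 1 \<le> i \<and> i \<le> n - 1)"

inductive braid_rel :: "nat \<Rightarrow> bword \<Rightarrow> bword \<Rightarrow> bool" for n where
  cancel: "\<lbrakk>1 \<le> i; i \<le> n - 1\<rbrakk> \<Longrightarrow> braid_rel n [(i, e), (i, \<not> e)] []"
| far: "\<lbrakk>1 \<le> i; i \<le> n - 1; 1 \<le> j; j \<le> n - 1; i + 2 \<le> j \<or> j + 2 \<le> i\<rbrakk>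
        \<Longrightarrow> braid_rel n [(i, True), (j, True)] [(j, True), (i, True)]"
| braid: "\<lbrakk>1 \<le> i; i \<le> n - 2\<rbrakk>
        \<Longrightarrow> braid_rel n [(i, True), (Suc i, True), (i, True)] [(Suc i, True), (i, True), (Suc i, True)]"

inductive braid_cong :: "nat \<Rightarrow> bword \<Rightarrow> bword \<Rightarrow> bool" for n where
  base: "braid_rel n u v \<Longrightarrow> braid_cong n u v"
| refl: "braid_cong n u u"
| sym: "braid_cong n u v \<Longrightarrow> braid_cong n v u"
| trans: "braid_cong n u v \<Longrightarrow> braid_cong n v w \<Longrightarrow> braid_cong n u w"
| ctxt: "braid_cong n u v \<Longrightarrow> braid_cong n (a @ u @ b) (a @ v @ b)"

definition braid_class :: "nat \<Rightarrow> bword \<Rightarrow> bword set" where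
  "braid_class n w = {v. valid_bword n v \<and> braid_cong n w v}"

definition braid_group :: "nat \<Rightarrow> bword set monoid" where
  "braid_group n = \<lparr> carrier = {braid_class n w | w. valid_bword n w},
     mult = (\<lambda>X Y. braid_class n ((SOME u. u \<in> X) @ (SOME v. v \<in> Y))),
     one = braid_class n [] \<rparr>"

fun perm_of_bword :: "bword \<Rightarrow> nat \<Rightarrow> nat" where
  "perm_of_bword [] = id"
| "perm_of_bword ((i, e) # w) = transpose i (Suc i) \<circ> perm_of_bword w"

definition braid_perm :: "bword set \<Rightarrow> nat \<Rightarrow> nat" where
  "braid_perm X = perm_of_bword (SOME w. w \<in> X)"

definition pure_braid_group :: "nat \<Rightarrow> bword set set" where
  "pure_braid_group n = {X \<in> carrier (braid_group n). braid_perm X = id}"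

definition bi_orderable :: "('a, 'b) monoid_scheme \<Rightarrow> 'a set \<Rightarrow> bool" where
  "bi_orderable G H \<longleftrightarrow> (\<exists>less :: 'a \<Rightarrow> 'a \<Rightarrow> bool.
     (\<forall>x\<in>H. \<not> less x x) \<and>
     (\<forall>x\<in>H. \<forall>y\<in>H. \<forall>z\<in>H. less x y \<longrightarrow> less y z \<longrightarrow> less x z) \<and>
     (\<forall>x\<in>H. \<forall>y\<in>H. x \<noteq> y \<longrightarrow> less x y \<or> less y x) \<and>
     (\<forall>x\<in>H. \<forall>y\<in>H. \<forall>g\<in>H. less x y \<longrightarrow>
        less (g \<otimes>\<^bsub>G\<^esub> x) (g \<otimes>\<^bsub>G\<^esub> y) \<and> less (x \<otimes>\<^bsub>G\<^esub> g) (y \<otimes>\<^bsub>G\<^esub> g)))"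

end

theory Submission
  imports Defs "HOL-Combinatorics.Permutations" "HOL-Combinatorics.Orbits"
begin

text \<open>In a bi-ordered group \<open>x < y\<close> implies \<open>x\<^sup>m < y\<^sup>m\<close>, so \<open>m\<close>-th roots are unique.
  If \<open>H\<close> contains a braid with non-trivial permutation \<open>\<tau>\<close> then, as \<open>P\<^sub>n \<subseteq> H\<close>, it contains every
  braid with permutation \<open>\<tau>\<close>; after conjugation, \<open>m\<close>-th roots are unique among the braids whose
  permutation is any conjugate \<open>\<pi>\<close> of \<open>\<tau>\<close>. Up to conjugacy \<open>\<tau>\<close> contains a cycle \<open>(1 2 \<dots> k)\<close>
  with \<open>k \<ge> 3\<close>, or contains \<open>(1 3)(2 4)\<close>, or swaps \<open>1, 2\<close> and fixes \<open>3\<close>. In each case we exhibit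
  two braids with permutation \<open>\<pi>\<close> and a common power which are told apart by the signed
  number of crossings between two strands.\<close>

section \<open>Braid words and the braid group\<close>

declare braid_cong.trans [trans]

lemma valid_bword_Nil [simp]: "valid_bword n []"
  by (simp add: valid_bword_def)

lemma valid_bword_Cons [simp]:
  "valid_bword n (x # w) \<longleftrightarrow> 1 \<le> fst x \<and> fst x \<le> n - 1 \<and> valid_bword n w"
  by (cases x) (auto simp: valid_bword_def)

lemma valid_bword_append [simp]: "valid_bword n (u @ v) \<longleftrightarrow> valid_bword n u \<and> valid_bword n v"
  by (auto simp: valid_bword_def)

lemma braid_cong_append:
  "braid_cong n u u' \<Longrightarrow> braid_cong n v v' \<Longrightarrow> braid_cong n (u @ v) (u' @ v')"
  using braid_cong.ctxt[of n u u' "[]" v] braid_cong.ctxt[of n v v' u' "[]"]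
  by (auto intro: braid_cong.trans)

definition inv_letter :: "nat \<times> bool \<Rightarrow> nat \<times> bool" where
  "inv_letter x = (fst x, \<not> snd x)"

definition inv_bword :: "bword \<Rightarrow> bword" where
  "inv_bword w = rev (map inv_letter w)"

lemma valid_inv_bword [simp]: "valid_bword n (inv_bword w) \<longleftrightarrow> valid_bword n w"
  by (auto simp: valid_bword_def inv_bword_def inv_letter_def)

lemma inv_bword_inv_bword [simp]: "inv_bword (inv_bword w) = w"
  by (induction w) (auto simp: inv_bword_def inv_letter_def)

lemma braid_cong_inv_right: "valid_bword n w \<Longrightarrow> braid_cong n (w @ inv_bword w) []"
proof (induction w)
  case (Cons x w)
  then have "braid_cong n ([x] @ (w @ inv_bword w) @ [inv_letter x]) ([x] @ [] @ [inv_letter x])"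
    by (intro braid_cong.ctxt) simp
  also have "braid_cong n ([x] @ [] @ [inv_letter x]) []"
    using Cons.prems by (cases x) (auto simp: inv_letter_def intro!: braid_cong.base braid_rel.cancel)
  finally show ?case by (simp add: inv_bword_def)
qed (simp add: inv_bword_def braid_cong.refl)

lemma braid_cong_inv_left: "valid_bword n w \<Longrightarrow> braid_cong n (inv_bword w @ w) []"
  using braid_cong_inv_right[of n "inv_bword w"] by simp

lemma braid_cong_cancel_right:
  "valid_bword n w \<Longrightarrow> braid_cong n (u @ w @ inv_bword w @ v) (u @ v)"
  using braid_cong.ctxt[OF braid_cong_inv_right, of n w u v] by simp

lemma braid_cong_cancel_left:
  "valid_bword n w \<Longrightarrow> braid_cong n (u @ inv_bword w @ w @ v) (u @ v)"
  using braid_cong.ctxt[OF braid_cong_inv_left, of n w u v] by simp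

lemma perm_of_bword_append [simp]: "perm_of_bword (u @ v) = perm_of_bword u \<circ> perm_of_bword v"
  by (induction u rule: perm_of_bword.induct) (auto simp: o_assoc)

lemma perm_of_bword_permutes: "valid_bword n w \<Longrightarrow> perm_of_bword w permutes {1..n}"
proof (induction w rule: perm_of_bword.induct)
  case (2 i e w)
  then have "transpose i (Suc i) permutes {1..n}" "perm_of_bword w permutes {1..n}"
    by (auto intro!: permutes_swap_id)
  then show ?case unfolding perm_of_bword.simps by (rule permutes_compose[rotated])
qed (simp add: permutes_id)

text \<open>\<open>strand_end w a\<close> is the position at which the strand starting at position \<open>a\<close>
  ends, and \<open>crossings w a b\<close> counts with sign the crossings of the strands starting at
  positions \<open>a\<close> and \<open>b\<close>.\<close>

fun strand_end :: "bword \<Rightarrow> nat \<Rightarrow> nat" where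
  "strand_end [] = id"
| "strand_end ((i, e) # w) = strand_end w \<circ> transpose i (Suc i)"

fun crossings :: "bword \<Rightarrow> nat \<Rightarrow> nat \<Rightarrow> int" where
  "crossings [] a b = 0"
| "crossings ((i, e) # w) a b =
     (if a = i \<and> b = Suc i \<or> a = Suc i \<and> b = i then (if e then 1 else -1) else 0)
     + crossings w (transpose i (Suc i) a) (transpose i (Suc i) b)"

lemma strand_end_append [simp]: "strand_end (u @ v) = strand_end v \<circ> strand_end u"
  by (induction u rule: strand_end.induct) (auto simp: o_assoc)

lemma strand_end_perm_of_bword: "strand_end w (perm_of_bword w a) = a"
  by (induction w arbitrary: a rule: strand_end.induct) auto

lemma crossings_append:
  "crossings (u @ v) a b = crossings u a b + crossings v (strand_end u a) (strand_end u b)"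
  by (induction u arbitrary: a b rule: strand_end.induct) auto

lemma braid_cong_invariants:
  assumes "braid_cong n u v"
  shows "perm_of_bword u = perm_of_bword v \<and> strand_end u = strand_end v \<and> crossings u = crossings v"
  using assms
proof (induction rule: braid_cong.induct)
  case (base u v)
  then show ?case
    by (induction rule: braid_rel.induct) (auto simp: fun_eq_iff transpose_def)
next
  case (ctxt u v a b)
  then show ?case by (auto simp: fun_eq_iff crossings_append)
qed auto

lemma braid_class_eq: "braid_cong n u v \<Longrightarrow> braid_class n u = braid_class n v"
  unfolding braid_class_def by (auto intro: braid_cong.trans braid_cong.sym)

lemma mem_braid_class: "valid_bword n w \<Longrightarrow> w \<in> braid_class n w"
  by (simp add: braid_class_def braid_cong.refl)

lemma braid_class_eq_iff:
  "valid_bword n v \<Longrightarrow> braid_class n u = braid_class n v \<longleftrightarrow> braid_cong n u v"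
  using mem_braid_class[of n v] braid_class_eq[of n u v] by (auto simp: braid_class_def)

lemma braid_cong_some_class: "valid_bword n w \<Longrightarrow> braid_cong n w (SOME u. u \<in> braid_class n w)"
  using someI[of "\<lambda>u. u \<in> braid_class n w" w] mem_braid_class[of n w]
  by (simp add: braid_class_def)

lemma carrier_braid_group: "carrier (braid_group n) = {braid_class n w | w. valid_bword n w}"
  by (simp add: braid_group_def)

lemma one_braid_group: "\<one>\<^bsub>braid_group n\<^esub> = braid_class n []"
  by (simp add: braid_group_def)

lemma braid_class_in_carrier: "valid_bword n w \<Longrightarrow> braid_class n w \<in> carrier (braid_group n)"
  by (auto simp: carrier_braid_group)

lemma braid_class_mult:
  "valid_bword n u \<Longrightarrow> valid_bword n v \<Longrightarrow>
    braid_class n u \<otimes>\<^bsub>braid_group n\<^esub> braid_class n v = braid_class n (u @ v)"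
  unfolding braid_group_def
  by (simp, rule braid_class_eq, rule braid_cong.sym, rule braid_cong_append; rule braid_cong_some_class)

lemma group_braid_group: "group (braid_group n)"
proof (rule groupI)
  fix x
  assume "x \<in> carrier (braid_group n)"
  then obtain w where w: "valid_bword n w" "x = braid_class n w"
    by (auto simp: carrier_braid_group)
  then show "\<exists>y\<in>carrier (braid_group n). y \<otimes>\<^bsub>braid_group n\<^esub> x = \<one>\<^bsub>braid_group n\<^esub>"
    by (intro bexI[of _ "braid_class n (inv_bword w)"])
      (auto simp: braid_class_mult one_braid_group braid_class_in_carrier
        intro!: braid_class_eq braid_cong_inv_left)
qed (auto simp: carrier_braid_group braid_class_mult one_braid_group)

lemma braid_perm_class: "valid_bword n w \<Longrightarrow> braid_perm (braid_class n w) = perm_of_bword w"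
  unfolding braid_perm_def using braid_cong_some_class braid_cong_invariants by metis

fun bword_pow :: "nat \<Rightarrow> bword \<Rightarrow> bword" where
  "bword_pow 0 w = []"
| "bword_pow (Suc m) w = bword_pow m w @ w"

lemma bword_pow_Suc': "bword_pow (Suc m) w = w @ bword_pow m w"
  by (induction m) auto

lemma valid_bword_pow [simp]: "valid_bword n w \<Longrightarrow> valid_bword n (bword_pow m w)"
  by (induction m) auto

lemma set_bword_pow: "set (bword_pow m w) \<subseteq> set w"
  by (induction m) auto

lemma braid_cong_bword_pow: "braid_cong n u v \<Longrightarrow> braid_cong n (bword_pow m u) (bword_pow m v)"
  by (induction m) (auto intro: braid_cong_append braid_cong.refl)

lemma braid_class_pow:
  "valid_bword n w \<Longrightarrow> braid_class n w [^]\<^bsub>braid_group n\<^esub> m = braid_class n (bword_pow m w)"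
  by (induction m) (auto simp: one_braid_group braid_class_mult)

lemma bword_pow_conj:
  assumes "valid_bword n g"
  shows "braid_cong n (bword_pow m (inv_bword g @ p @ g)) (inv_bword g @ bword_pow m p @ g)"
proof (induction m)
  case 0
  show ?case using braid_cong.sym[OF braid_cong_inv_left[OF assms]] by simp
next
  case (Suc m)
  have "braid_cong n (bword_pow m (inv_bword g @ p @ g) @ inv_bword g @ p @ g)
      ((inv_bword g @ bword_pow m p) @ g @ inv_bword g @ p @ g)"
    using braid_cong_append[OF Suc braid_cong.refl] by simp
  also have "braid_cong n \<dots> ((inv_bword g @ bword_pow m p) @ p @ g)"
    by (rule braid_cong_cancel_right[OF assms])
  finally show ?case by simp
qed

lemma braid_cong_conj_cancel:
  assumes g: "valid_bword n g" and "braid_cong n (inv_bword g @ p @ g) (inv_bword g @ q @ g)"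
  shows "braid_cong n p q"
proof -
  have strip: "braid_cong n (g @ (inv_bword g @ r @ g) @ inv_bword g) r" for r
  proof -
    have "braid_cong n (g @ inv_bword g @ r @ g @ inv_bword g) (r @ g @ inv_bword g)"
      using braid_cong_cancel_right[OF g, of "[]" "r @ g @ inv_bword g"] by simp
    also have "braid_cong n \<dots> r"
      using braid_cong_cancel_right[OF g, of r "[]"] by simp
    finally show ?thesis by simp
  qed
  have "braid_cong n p (g @ (inv_bword g @ p @ g) @ inv_bword g)"
    by (rule braid_cong.sym[OF strip])
  also have "braid_cong n \<dots> (g @ (inv_bword g @ q @ g) @ inv_bword g)"
    by (rule braid_cong.ctxt) fact
  also have "braid_cong n \<dots> q"
    by (rule strip)
  finally show ?thesis .
qed

lemma bword_of_transpose:
  assumes "a < b"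
  shows "\<exists>w. (\<forall>x\<in>set w. a \<le> fst x \<and> fst x < b) \<and> perm_of_bword w = transpose a b"
  using assms
proof (induction b)
  case (Suc b)
  show ?case
  proof (cases "a = b")
    case True
    then show ?thesis by (intro exI[of _ "[(a, True)]"]) auto
  next
    case False
    with Suc obtain w where w: "\<forall>x\<in>set w. a \<le> fst x \<and> fst x < b" "perm_of_bword w = transpose a b"
      by auto
    have "transpose a (Suc b) = transpose b (Suc b) \<circ> transpose a b \<circ> transpose b (Suc b)"
      using False Suc.prems by (auto simp: fun_eq_iff transpose_def)
    then show ?thesis
      using w Suc.prems by (intro exI[of _ "[(b, True)] @ w @ [(b, True)]"]) auto
  qed
qed simp

lemma bword_of_permutes:
  assumes "f permutes {a..b}"
  obtains w where "\<forall>x\<in>set w. a \<le> fst x \<and> fst x < b" "perm_of_bword w = f"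
proof -
  have "\<exists>w. (\<forall>x\<in>set w. a \<le> fst x \<and> fst x < b) \<and> perm_of_bword w = f"
    using assms finite_atLeastAtMost
  proof (induction rule: permutes_induct)
    case id
    then show ?case by (intro exI[of _ "[]"]) auto
  next
    case (swap x y p)
    then obtain w where w: "\<forall>z\<in>set w. a \<le> fst z \<and> fst z < b" "perm_of_bword w = p"
      by blast
    obtain v where v: "\<forall>z\<in>set v. a \<le> fst z \<and> fst z < b" "perm_of_bword v = transpose x y"
    proof (cases "x < y")
      case True
      then show ?thesis
        using bword_of_transpose[of x y] swap.hyps that by fastforce
    next
      case False
      then have "y < x" using swap.hyps by simp
      then show ?thesis
        using bword_of_transpose[of y x] swap.hyps that by (fastforce simp: transpose_commute)
    qed
    then show ?case using w by (intro exI[of _ "v @ w"]) auto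
  qed
  then show ?thesis using that by blast
qed

lemma perm_of_inv_bword:
  assumes "valid_bword n w"
  shows "perm_of_bword (inv_bword w) = inv_into UNIV (perm_of_bword w)"
  using braid_cong_invariants[OF braid_cong_inv_right[OF assms]]
    braid_cong_invariants[OF braid_cong_inv_left[OF assms]]
  by (metis inv_unique_comp perm_of_bword.simps(1) perm_of_bword_append)

section \<open>Unique roots\<close>

lemma bi_orderable_pow_eq_imp_eq:
  fixes m :: nat
  assumes G: "monoid G" and H: "subgroup H G" and "bi_orderable G H"
    and u: "u \<in> H" and v: "v \<in> H" and "0 < m" and eq: "u [^]\<^bsub>G\<^esub> m = v [^]\<^bsub>G\<^esub> m"
  shows "u = v"
proof (rule ccontr)
  assume "u \<noteq> v"
  obtain less where irrefl: "\<forall>x\<in>H. \<not> less x x"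
    and trans: "\<forall>x\<in>H. \<forall>y\<in>H. \<forall>z\<in>H. less x y \<longrightarrow> less y z \<longrightarrow> less x z"
    and total: "\<forall>x\<in>H. \<forall>y\<in>H. x \<noteq> y \<longrightarrow> less x y \<or> less y x"
    and mult: "\<forall>x\<in>H. \<forall>y\<in>H. \<forall>g\<in>H. less x y \<longrightarrow>
      less (g \<otimes>\<^bsub>G\<^esub> x) (g \<otimes>\<^bsub>G\<^esub> y) \<and> less (x \<otimes>\<^bsub>G\<^esub> g) (y \<otimes>\<^bsub>G\<^esub> g)"
    using \<open>bi_orderable G H\<close> unfolding bi_orderable_def by blast
  have pow_in_H: "x [^]\<^bsub>G\<^esub> k \<in> H" if "x \<in> H" for x and k :: nat
    using that by (induction k) (auto intro: subgroup.m_closed[OF H] subgroup.one_closed[OF H])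
  have pow_mono: "less (x [^]\<^bsub>G\<^esub> Suc k) (y [^]\<^bsub>G\<^esub> Suc k)"
    if x: "x \<in> H" and y: "y \<in> H" and "less x y" for x y and k :: nat
  proof (induction k)
    case 0
    have "x \<in> carrier G" "y \<in> carrier G" using x y subgroup.mem_carrier[OF H] by auto
    then show ?case using \<open>less x y\<close> by (simp add: monoid.l_one[OF G])
  next
    case (Suc k)
    let ?x = "x [^]\<^bsub>G\<^esub> Suc k" and ?y = "y [^]\<^bsub>G\<^esub> Suc k"
    have "less (?x \<otimes>\<^bsub>G\<^esub> x) (?y \<otimes>\<^bsub>G\<^esub> x)"
      using mult Suc x pow_in_H[OF x] pow_in_H[OF y] by blast
    moreover have "less (?y \<otimes>\<^bsub>G\<^esub> x) (?y \<otimes>\<^bsub>G\<^esub> y)"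
      using mult \<open>less x y\<close> x y pow_in_H[OF y] by blast
    moreover have "?x \<otimes>\<^bsub>G\<^esub> x \<in> H" "?y \<otimes>\<^bsub>G\<^esub> x \<in> H" "?y \<otimes>\<^bsub>G\<^esub> y \<in> H"
      using x y pow_in_H subgroup.m_closed[OF H] by blast+
    ultimately have "less (?x \<otimes>\<^bsub>G\<^esub> x) (?y \<otimes>\<^bsub>G\<^esub> y)"
      using trans by blast
    then show ?case by simp
  qed
  obtain k where m: "m = Suc k" using \<open>0 < m\<close> gr0_implies_Suc by blast
  have "less u v \<or> less v u" using total u v \<open>u \<noteq> v\<close> by blast
  then have "less (u [^]\<^bsub>G\<^esub> m) (v [^]\<^bsub>G\<^esub> m) \<or> less (v [^]\<^bsub>G\<^esub> m) (u [^]\<^bsub>G\<^esub> m)"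
    using pow_mono u v m by blast
  then show False using irrefl eq pow_in_H[OF v] by simp
qed

definition unique_word_roots :: "nat \<Rightarrow> (nat \<Rightarrow> nat) \<Rightarrow> bool" where
  "unique_word_roots n \<pi> \<longleftrightarrow>
     (\<forall>p q m. valid_bword n p \<longrightarrow> valid_bword n q \<longrightarrow> perm_of_bword p = \<pi> \<longrightarrow> perm_of_bword q = \<pi>
        \<longrightarrow> 0 < m \<longrightarrow> braid_cong n (bword_pow m p) (bword_pow m q) \<longrightarrow> braid_cong n p q)"

lemma unique_word_rootsD:
  assumes "unique_word_roots n \<pi>" "valid_bword n p" "valid_bword n q"
    "perm_of_bword p = \<pi>" "perm_of_bword q = \<pi>" "0 < m"
    "braid_cong n (bword_pow m p) (bword_pow m q)"
  shows "braid_cong n p q"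
  using assms unfolding unique_word_roots_def by blast

text \<open>Plain \<open>inv\<close> would be read as the group inverse of HOL-Algebra here.\<close>

abbreviation perm_conj :: "('a \<Rightarrow> 'a) \<Rightarrow> ('a \<Rightarrow> 'a) \<Rightarrow> 'a \<Rightarrow> 'a" where
  "perm_conj \<rho> \<tau> \<equiv> \<rho> \<circ> \<tau> \<circ> inv_into UNIV \<rho>"

lemma braid_class_in_subgroup:
  assumes H: "subgroup H (braid_group n)" and pure: "pure_braid_group n \<subseteq> H"
    and w0: "valid_bword n w0" "braid_class n w0 \<in> H"
    and w: "valid_bword n w" "perm_of_bword w = perm_of_bword w0"
  shows "braid_class n w \<in> H"
proof -
  have "perm_of_bword (w @ inv_bword w0) = id"
    using w perm_of_inv_bword[OF w0(1)] permutes_inv_o(1)[OF perm_of_bword_permutes[OF w0(1)]]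
    by simp
  then have "braid_class n (w @ inv_bword w0) \<in> H"
    using pure w w0 by (auto simp: pure_braid_group_def braid_perm_class braid_class_in_carrier)
  then have "braid_class n (w @ inv_bword w0) \<otimes>\<^bsub>braid_group n\<^esub> braid_class n w0 \<in> H"
    using subgroup.m_closed[OF H] w0(2) by blast
  moreover have "braid_cong n (w @ inv_bword w0 @ w0 @ []) (w @ [])"
    by (rule braid_cong_cancel_left[OF w0(1)])
  ultimately show ?thesis
    using w w0 by (simp add: braid_class_mult braid_class_eq)
qed

lemma unique_word_roots_conj:
  assumes H: "subgroup H (braid_group n)" and pure: "pure_braid_group n \<subseteq> H"
    and bo: "bi_orderable (braid_group n) H"
    and w0: "valid_bword n w0" "braid_class n w0 \<in> H" and \<rho>: "\<rho> permutes {1..n}"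
  shows "unique_word_roots n (perm_conj \<rho> (perm_of_bword w0))"
  unfolding unique_word_roots_def
proof (intro allI impI)
  fix p q and m :: nat
  assume p: "valid_bword n p" "perm_of_bword p = perm_conj \<rho> (perm_of_bword w0)"
    and q: "valid_bword n q" "perm_of_bword q = perm_conj \<rho> (perm_of_bword w0)"
    and "0 < m" and pow_cong: "braid_cong n (bword_pow m p) (bword_pow m q)"
  obtain g where "\<forall>x\<in>set g. 1 \<le> fst x \<and> fst x < n" and g: "perm_of_bword g = \<rho>"
    using bword_of_permutes[OF \<rho>] by blast
  then have valid_g: "valid_bword n g" by (auto simp: valid_bword_def)
  have conj_in_H: "braid_class n (inv_bword g @ s @ g) \<in> H"
    if "valid_bword n s" "perm_of_bword s = perm_conj \<rho> (perm_of_bword w0)" for s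
  proof (rule braid_class_in_subgroup[OF H pure w0])
    show "valid_bword n (inv_bword g @ s @ g)" using valid_g that by simp
    show "perm_of_bword (inv_bword g @ s @ g) = perm_of_bword w0"
      using that perm_of_inv_bword[OF valid_g] g
      by (simp add: fun_eq_iff permutes_inverses(2)[OF \<rho>])
  qed
  have conj_pow: "braid_class n (inv_bword g @ s @ g) [^]\<^bsub>braid_group n\<^esub> m
      = braid_class n (inv_bword g @ bword_pow m s @ g)" if "valid_bword n s" for s
    using braid_class_pow[of n "inv_bword g @ s @ g" m] braid_class_eq[OF bword_pow_conj[OF valid_g]]
      valid_g that by simp
  have "braid_class n (inv_bword g @ bword_pow m p @ g) = braid_class n (inv_bword g @ bword_pow m q @ g)"
    using braid_class_eq[OF braid_cong.ctxt[OF pow_cong]] .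
  then have "braid_class n (inv_bword g @ p @ g) = braid_class n (inv_bword g @ q @ g)"
    using bi_orderable_pow_eq_imp_eq[OF group.is_monoid[OF group_braid_group] H bo
        conj_in_H[OF p] conj_in_H[OF q] \<open>0 < m\<close>] conj_pow p(1) q(1) by simp
  then show "braid_cong n p q"
    using braid_cong_conj_cancel[OF valid_g] braid_class_eq_iff valid_g q(1) by simp
qed

section \<open>Commuting braid words\<close>

definition bwords_commute :: "nat \<Rightarrow> bword \<Rightarrow> bword \<Rightarrow> bool" where
  "bwords_commute n u v \<longleftrightarrow> braid_cong n (u @ v) (v @ u)"

lemma bwords_commute_sym: "bwords_commute n u v \<Longrightarrow> bwords_commute n v u"
  by (simp add: bwords_commute_def braid_cong.sym)

lemma bwords_commute_Nil [simp]: "bwords_commute n [] v"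
  by (simp add: bwords_commute_def braid_cong.refl)

lemma bwords_commute_append:
  assumes "bwords_commute n u w" and "bwords_commute n v w"
  shows "bwords_commute n (u @ v) w"
proof -
  have "braid_cong n (u @ v @ w) (u @ w @ v)"
    using braid_cong_append[OF braid_cong.refl assms(2)[unfolded bwords_commute_def]] .
  also have "braid_cong n \<dots> (w @ u @ v)"
    using braid_cong_append[OF assms(1)[unfolded bwords_commute_def] braid_cong.refl, of v] by simp
  finally show ?thesis by (simp add: bwords_commute_def)
qed

lemma bwords_commute_braid_cong:
  assumes "bwords_commute n u v'" and "braid_cong n v v'"
  shows "bwords_commute n u v"
proof -
  have "braid_cong n (u @ v) (u @ v')"
    using braid_cong_append[OF braid_cong.refl assms(2)] .
  also have "braid_cong n \<dots> (v' @ u)"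
    using assms(1) by (simp add: bwords_commute_def)
  also have "braid_cong n \<dots> (v @ u)"
    using braid_cong_append[OF braid_cong.sym[OF assms(2)] braid_cong.refl] .
  finally show ?thesis by (simp add: bwords_commute_def)
qed

lemma bwords_commute_of_letters:
  assumes "\<forall>x\<in>set u. \<forall>y\<in>set v. bwords_commute n [x] [y]"
  shows "bwords_commute n u v"
proof -
  have letter: "bwords_commute n [x] v" if "\<forall>y\<in>set v. bwords_commute n [x] [y]" for x
    using that
  proof (induction v)
    case (Cons y v)
    then show ?case
      using bwords_commute_append[of n "[y]" "[x]" v] bwords_commute_sym by simp
  qed (simp add: bwords_commute_def braid_cong.refl)
  show ?thesis
    using assms
  proof (induction u)
    case (Cons x u)
    then show ?case using bwords_commute_append[of n "[x]" v u] letter by simp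
  qed simp
qed

lemma bwords_commute_inv_bword:
  assumes "valid_bword n u" and "bwords_commute n u w"
  shows "bwords_commute n (inv_bword u) w"
proof -
  have "braid_cong n (inv_bword u @ w) (inv_bword u @ (w @ u) @ inv_bword u)"
    using braid_cong.sym[OF braid_cong_cancel_right[OF assms(1), of "inv_bword u @ w" "[]"]] by simp
  also have "braid_cong n \<dots> (inv_bword u @ (u @ w) @ inv_bword u)"
    using braid_cong.ctxt[OF assms(2)[unfolded bwords_commute_def, THEN braid_cong.sym]] .
  also have "braid_cong n \<dots> (w @ inv_bword u)"
    using braid_cong_cancel_left[OF assms(1), of "[]" "w @ inv_bword u"] by simp
  finally show ?thesis by (simp add: bwords_commute_def)
qed

lemma bwords_commute_letter_sign:
  assumes "bwords_commute n [(i, True)] w" and "1 \<le> i" "i \<le> n - 1"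
  shows "bwords_commute n [(i, e)] w"
proof (cases e)
  case False
  then have "[(i, e)] = inv_bword [(i, True)]" by (simp add: inv_bword_def inv_letter_def)
  then show ?thesis using bwords_commute_inv_bword[OF _ assms(1)] assms(2,3) by simp
qed (use assms in simp)

lemma far_letters_commute:
  assumes "1 \<le> i" "i \<le> n - 1" "1 \<le> j" "j \<le> n - 1" "i + 2 \<le> j \<or> j + 2 \<le> i"
  shows "bwords_commute n [(i, e)] [(j, f)]"
proof -
  have "bwords_commute n [(i, True)] [(j, True)]"
    unfolding bwords_commute_def using assms by (simp add: braid_cong.base braid_rel.far)
  then have "bwords_commute n [(j, True)] [(i, e)]"
    using bwords_commute_letter_sign[of n i "[(j, True)]" e] bwords_commute_sym assms by blast
  then show ?thesis
    using bwords_commute_letter_sign[of n j "[(i, e)]" f] bwords_commute_sym assms by blast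
qed

lemma bwords_commute_pow: "bwords_commute n u v \<Longrightarrow> bwords_commute n (bword_pow m u) v"
  by (induction m) (auto intro: bwords_commute_append)

lemma bword_pow_append:
  assumes "bwords_commute n u v"
  shows "braid_cong n (bword_pow m (u @ v)) (bword_pow m u @ bword_pow m v)"
proof (induction m)
  case (Suc m)
  have "braid_cong n (bword_pow m (u @ v) @ u @ v) ((bword_pow m u @ bword_pow m v) @ u @ v)"
    using braid_cong_append[OF Suc braid_cong.refl] .
  also have "braid_cong n \<dots> (bword_pow m u @ (u @ bword_pow m v) @ v)"
    using bwords_commute_pow[OF bwords_commute_sym[OF assms], of m]
      braid_cong.ctxt[of n "bword_pow m v @ u" "u @ bword_pow m v" "bword_pow m u" v]
    by (simp add: bwords_commute_def)
  finally show ?case by simp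
qed (simp add: braid_cong.refl)

text \<open>\<open>delta k\<close> is \<open>\<sigma>\<^sub>1 \<cdots> \<sigma>\<^sub>k\<^sub>-\<^sub>1\<close>, whose \<open>k\<close>-th power is the full twist of the first
  \<open>k\<close> strands.\<close>

definition delta :: "nat \<Rightarrow> bword" where
  "delta k = map (\<lambda>i. (i, True)) [1..<k]"

lemma delta_Suc: "1 \<le> k \<Longrightarrow> delta (Suc k) = delta k @ [(k, True)]"
  by (simp add: delta_def)

lemma perm_of_delta:
  assumes "1 \<le> k"
  shows "perm_of_bword (delta k) i = (if 1 \<le> i \<and> i < k then Suc i else if i = k then 1 else i)"
  using assms
proof (induction k arbitrary: i rule: nat_induct_at_least)
  case (Suc k)
  then show ?case by (auto simp: delta_Suc transpose_def)
qed (simp add: delta_def)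

lemma delta_letter:
  assumes "1 \<le> i" "i + 2 \<le> k" "k \<le> n"
  shows "braid_cong n (delta k @ [(i, True)]) ((Suc i, True) # delta k)"
proof -
  let ?A = "map (\<lambda>i. (i, True)) [1..<i]" and ?C = "map (\<lambda>i. (i, True)) [i + 2..<k]"
  have "[1..<k] = [1..<i] @ [i, Suc i] @ [i + 2..<k]"
    using assms upt_add_eq_append[of 1 i "k - i"] by (simp add: upt_conv_Cons)
  then have delta: "delta k = ?A @ [(i, True), (Suc i, True)] @ ?C"
    by (simp add: delta_def)
  have "bwords_commute n ?C [(i, True)]" "bwords_commute n ?A [(Suc i, True)]"
    by (rule bwords_commute_of_letters, use assms in \<open>auto intro!: far_letters_commute\<close>)+
  then have "braid_cong n (delta k @ [(i, True)]) (?A @ [(i, True), (Suc i, True), (i, True)] @ ?C)"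
    using braid_cong.ctxt[of n "?C @ [(i, True)]" "[(i, True)] @ ?C" "?A @ [(i, True), (Suc i, True)]" "[]"]
    by (simp add: delta bwords_commute_def)
  also have "braid_cong n \<dots> (?A @ [(Suc i, True), (i, True), (Suc i, True)] @ ?C)"
    using assms by (intro braid_cong.ctxt braid_cong.base braid_rel.braid) auto
  also have "braid_cong n \<dots> ((Suc i, True) # delta k)"
    using \<open>bwords_commute n ?A [(Suc i, True)]\<close>
      braid_cong.ctxt[of n "?A @ [(Suc i, True)]" "[(Suc i, True)] @ ?A" "[]" "[(i, True), (Suc i, True)] @ ?C"]
    by (simp add: delta bwords_commute_def)
  finally show ?thesis .
qed

lemma delta_shift:
  assumes "\<forall>i\<in>set is. 1 \<le> i \<and> i + 2 \<le> k" and "k \<le> n"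
  shows "braid_cong n (delta k @ map (\<lambda>i. (i, True)) is) (map (\<lambda>i. (Suc i, True)) is @ delta k)"
  using assms(1)
proof (induction "is")
  case (Cons i "is")
  have "braid_cong n ((delta k @ [(i, True)]) @ map (\<lambda>i. (i, True)) is)
      (((Suc i, True) # delta k) @ map (\<lambda>i. (i, True)) is)"
    using braid_cong_append[OF delta_letter braid_cong.refl] Cons.prems assms(2) by simp
  also have "braid_cong n \<dots> ([(Suc i, True)] @ map (\<lambda>i. (Suc i, True)) is @ delta k)"
    using braid_cong_append[OF braid_cong.refl Cons.IH, of "[(Suc i, True)]"] Cons.prems by simp
  finally show ?case by simp
qed (simp add: braid_cong.refl)

lemma delta_sq_letter:
  assumes "1 \<le> k" "Suc k \<le> n"
  shows "braid_cong n (delta (Suc k) @ delta (Suc k) @ [(k, True)])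
    ((1, True) # delta (Suc k) @ delta (Suc k))"
proof -
  let ?M = "map (\<lambda>i. (i, True)) [2..<Suc k]"
  have delta_Cons: "delta (Suc k) = (1, True) # ?M"
    using assms by (simp add: delta_def upt_conv_Cons numeral_2_eq_2)
  have "map (\<lambda>i. (Suc i, True)) [1..<k] = map (\<lambda>i. (i, True)) (map Suc [1..<k])"
    by simp
  also have "\<dots> = ?M"
    by (simp only: map_Suc_upt) (simp add: numeral_2_eq_2)
  finally have "braid_cong n (delta (Suc k) @ delta k) (?M @ delta (Suc k))"
    using delta_shift[of "[1..<k]" "Suc k" n] assms by (fastforce simp: delta_def)
  from braid_cong.ctxt[OF braid_cong.sym[OF this], of "[(1, True)]" "[(k, True)]"]
  have "braid_cong n ((1, True) # ?M @ delta (Suc k) @ [(k, True)])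
      ((1, True) # delta (Suc k) @ delta k @ [(k, True)])"
    by simp
  moreover have "delta (Suc k) @ delta (Suc k) @ [(k, True)] = (1, True) # ?M @ delta (Suc k) @ [(k, True)]"
    by (subst (1) delta_Cons) simp
  moreover have "(1, True) # delta (Suc k) @ delta k @ [(k, True)] = (1, True) # delta (Suc k) @ delta (Suc k)"
    using delta_Suc[OF assms(1)] by simp
  ultimately show ?thesis by metis
qed

lemma delta_pow_letter:
  assumes "m + 2 \<le> k" "k \<le> n"
  shows "braid_cong n (bword_pow m (delta k) @ [(1, True)]) ((Suc m, True) # bword_pow m (delta k))"
  using assms(1)
proof (induction m)
  case (Suc m)
  have "braid_cong n (delta k @ bword_pow m (delta k) @ [(1, True)])
      (delta k @ ((Suc m, True) # bword_pow m (delta k)))"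
    using braid_cong_append[OF braid_cong.refl Suc.IH, of "delta k"] Suc.prems by simp
  also have "braid_cong n \<dots> ((Suc (Suc m), True) # delta k @ bword_pow m (delta k))"
  proof -
    have "braid_cong n (delta k @ [(Suc m, True)]) ((Suc (Suc m), True) # delta k)"
      using delta_letter Suc.prems assms(2) by simp
    from braid_cong_append[OF this braid_cong.refl] show ?thesis by simp
  qed
  finally show ?case by (simp add: bword_pow_Suc' del: bword_pow.simps)
qed (simp add: braid_cong.refl)

lemma bwords_commute_delta_pow:
  assumes "2 \<le> k" "k \<le> n"
  shows "bwords_commute n [(1, True)] (bword_pow k (delta k))"
proof -
  obtain j where k: "k = Suc (Suc j)" using assms by (metis add_2_eq_Suc le_Suc_ex)
  have pow_k: "bword_pow k w = w @ w @ bword_pow j w" for w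
    using k by (simp add: bword_pow_Suc' del: bword_pow.simps)
  have "braid_cong n ([(1, True)] @ delta k @ delta k @ bword_pow j (delta k))
      (delta k @ delta k @ [(Suc j, True)] @ bword_pow j (delta k))"
    using braid_cong_append[OF braid_cong.sym[OF delta_sq_letter[of "Suc j" n]] braid_cong.refl,
        of "bword_pow j (delta k)"] assms k by simp
  also have "braid_cong n \<dots> (delta k @ delta k @ bword_pow j (delta k) @ [(1, True)])"
    using braid_cong.ctxt[OF braid_cong.sym[OF delta_pow_letter[of j k n]], of "delta k @ delta k" "[]"]
      assms k by simp
  finally show ?thesis
    by (simp add: bwords_commute_def pow_k)
qed

section \<open>Braids with distinct roots of a common power\<close>

lemma bwords_commute_sigma_sq_perm:
  assumes "bwords_commute n [(i, True), (i, True)] x"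
  shows "perm_of_bword x ` {i, Suc i} = {i, Suc i}"
proof -
  let ?s = "[(i, True), (i, True)]" and ?a = "perm_of_bword x i" and ?b = "perm_of_bword x (Suc i)"
  have "strand_end ?s = id"
    by (simp add: fun_eq_iff)
  moreover have "crossings (?s @ x) ?a ?b = crossings (x @ ?s) ?a ?b"
    using braid_cong_invariants[OF assms[unfolded bwords_commute_def]] by simp
  ultimately have "crossings ?s ?a ?b = crossings ?s i (Suc i)"
    by (simp add: crossings_append strand_end_perm_of_bword)
  then have "?a = i \<and> ?b = Suc i \<or> ?a = Suc i \<and> ?b = i"
    by (auto simp: transpose_def split: if_splits)
  then show ?thesis by auto
qed

lemma extend_bword:
  assumes c: "\<forall>x\<in>set c. 1 \<le> fst x \<and> fst x < j" and "j \<le> n"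
    and \<pi>: "\<pi> permutes {1..n}" and agree: "\<forall>i\<in>{1..j}. \<pi> i = perm_of_bword c i"
  obtains w where "\<forall>x\<in>set w. Suc j \<le> fst x \<and> fst x < n" "perm_of_bword (c @ w) = \<pi>"
proof -
  let ?c = "perm_of_bword c"
  have "valid_bword n c"
    using c \<open>j \<le> n\<close> by (fastforce simp: valid_bword_def)
  then have c_permutes: "?c permutes {1..n}"
    by (rule perm_of_bword_permutes)
  define f where "f = inv_into UNIV ?c \<circ> \<pi>"
  have "f permutes {1..n}"
    unfolding f_def by (intro permutes_compose \<pi> permutes_inv c_permutes)
  moreover have "f i = i" if "i \<in> {1..j}" for i
    using agree that permutes_inverses(2)[OF c_permutes] by (simp add: f_def)
  ultimately have "f permutes {Suc j..n}"
    by (rule permutes_superset) auto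
  then obtain w where w: "\<forall>x\<in>set w. Suc j \<le> fst x \<and> fst x < n" "perm_of_bword w = f"
    by (rule bword_of_permutes)
  have "perm_of_bword (c @ w) = \<pi>"
    using w(2) permutes_inverses(1)[OF c_permutes] by (simp add: f_def fun_eq_iff)
  with w(1) show ?thesis by (rule that)
qed

lemma extend_bword_commute:
  assumes \<pi>: "\<pi> permutes {1..n}"
    and c: "\<forall>x\<in>set c. 1 \<le> fst x \<and> fst x < j" and j: "2 \<le> j" "j \<le> n"
    and agree: "\<forall>i\<in>{1..j}. \<pi> i = perm_of_bword c i"
    and commute: "bwords_commute n [(1, True)] (bword_pow m c)"
  obtains x where "valid_bword n x" "perm_of_bword x = \<pi>" "bwords_commute n [(1, True)] (bword_pow m x)"
proof -
  obtain w where w: "\<forall>x\<in>set w. Suc j \<le> fst x \<and> fst x < n" and perm: "perm_of_bword (c @ w) = \<pi>"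
    using extend_bword[OF c j(2) \<pi> agree] by blast
  have valid: "valid_bword n (c @ w)"
    using c w j by (fastforce simp: valid_bword_def)
  have far: "bwords_commute n [(i, e)] [y]" if "1 \<le> i" "i < j" "y \<in> set w" for i e y
    using that w j by (cases y) (auto intro!: far_letters_commute)
  have "bwords_commute n [(1, True)] (bword_pow m w)"
    using far[of 1] j set_bword_pow[of m w] by (intro bwords_commute_of_letters) auto
  then have "bwords_commute n (bword_pow m c @ bword_pow m w) [(1, True)]"
    using bwords_commute_append bwords_commute_sym commute by blast
  moreover have "braid_cong n (bword_pow m (c @ w)) (bword_pow m c @ bword_pow m w)"
    using c far by (intro bword_pow_append bwords_commute_of_letters) auto
  ultimately have "bwords_commute n [(1, True)] (bword_pow m (c @ w))"
    using bwords_commute_braid_cong bwords_commute_sym by blast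
  with valid perm show ?thesis by (rule that)
qed

text \<open>If \<open>\<sigma>\<^sub>1\<close> commutes with \<open>x\<^sup>m\<close>, then \<open>\<sigma>\<^sub>1\<^sup>2 x \<sigma>\<^sub>1\<^sup>-\<^sup>2\<close> and \<open>x\<close> are \<open>m\<close>-th roots of \<open>x\<^sup>m\<close>
  with the same permutation, and they differ unless the permutation of \<open>x\<close> preserves \<open>{1, 2}\<close>.\<close>

lemma not_unique_word_roots_of_commute:
  assumes "2 \<le> n" and x: "valid_bword n x" "perm_of_bword x = \<pi>"
    and "0 < m" and commute: "bwords_commute n [(1, True)] (bword_pow m x)"
    and moved: "\<pi> ` {1, 2} \<noteq> {1, 2}"
  shows "\<not> unique_word_roots n \<pi>"
proof
  assume roots: "unique_word_roots n \<pi>"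
  define g where "g = [(1 :: nat, True), (1 :: nat, True)]"
  have valid_g: "valid_bword n g" using \<open>2 \<le> n\<close> by (simp add: g_def)
  have perm_g: "perm_of_bword g = id" "perm_of_bword (inv_bword g) = id"
    by (auto simp: g_def inv_bword_def inv_letter_def fun_eq_iff)
  have g_commute: "bwords_commute n g (bword_pow m x)"
    using bwords_commute_append[OF commute commute] by (simp add: g_def)
  have "braid_cong n (bword_pow m (g @ x @ inv_bword g)) (g @ bword_pow m x @ inv_bword g)"
    using bword_pow_conj[of n "inv_bword g" m x] valid_g by simp
  also have "braid_cong n \<dots> (bword_pow m x @ g @ inv_bword g @ [])"
    using braid_cong_append[OF g_commute[unfolded bwords_commute_def] braid_cong.refl,
        of "inv_bword g"] by simp
  also have "braid_cong n \<dots> (bword_pow m x)"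
    using braid_cong_cancel_right[OF valid_g, of "bword_pow m x" "[]"] by simp
  finally have pow_cong: "braid_cong n (bword_pow m (g @ x @ inv_bword g)) (bword_pow m x)" .
  have conj_cong: "braid_cong n (g @ x @ inv_bword g) x"
  proof (rule unique_word_rootsD[OF roots _ x(1) _ x(2) \<open>0 < m\<close> pow_cong])
    show "valid_bword n (g @ x @ inv_bword g)" using valid_g x by simp
    show "perm_of_bword (g @ x @ inv_bword g) = \<pi>" using perm_g x by simp
  qed
  have "braid_cong n (g @ x) (g @ x @ inv_bword g @ g)"
    using braid_cong.sym[OF braid_cong_cancel_left[OF valid_g, of "g @ x" "[]"]] by simp
  also have "braid_cong n \<dots> (x @ g)"
    using braid_cong_append[OF conj_cong braid_cong.refl, of g] by simp
  finally have "bwords_commute n g x"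
    unfolding bwords_commute_def .
  then have "\<pi> ` {1, 2} = {1, 2}"
    using bwords_commute_sigma_sq_perm[of n 1 x] x by (simp add: g_def numeral_2_eq_2)
  with moved show False ..
qed

lemma not_unique_word_roots_cycle:
  assumes \<pi>: "\<pi> permutes {1..n}" and k: "3 \<le> k" "k \<le> n"
    and cycle: "\<And>i. i \<in> {1..<k} \<Longrightarrow> \<pi> i = Suc i" "\<pi> k = 1"
  shows "\<not> unique_word_roots n \<pi>"
proof -
  have agree: "\<forall>i\<in>{1..k}. \<pi> i = perm_of_bword (delta k) i"
    using cycle k by (auto simp: perm_of_delta)
  have letters: "\<forall>x\<in>set (delta k). 1 \<le> fst x \<and> fst x < k"
    by (auto simp: delta_def)
  have "bwords_commute n [(1, True)] (bword_pow k (delta k))"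
    using bwords_commute_delta_pow k by simp
  then obtain x where x: "valid_bword n x" "perm_of_bword x = \<pi>"
      "bwords_commute n [(1, True)] (bword_pow k x)"
    using extend_bword_commute[OF \<pi> letters _ k(2) agree] k by auto
  have "\<pi> ` {1, 2} \<noteq> {1, 2}"
    using cycle k by (auto simp: doubleton_eq_iff)
  with x show ?thesis
    using not_unique_word_roots_of_commute[of n x \<pi> k] k by simp
qed

lemma not_unique_word_roots_double_transposition:
  assumes \<pi>: "\<pi> permutes {1..n}" and "4 \<le> n"
    and "\<pi> 1 = 3" "\<pi> 2 = 4" "\<pi> 3 = 1" "\<pi> 4 = 2"
  shows "\<not> unique_word_roots n \<pi>"
proof -
  have "{1..4} = {1, 2, 3, 4 :: nat}" by auto
  then have "\<forall>i\<in>{1..4}. \<pi> i = perm_of_bword (delta 4 @ delta 4) i"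
    using assms by (simp add: perm_of_delta)
  moreover have "bwords_commute n [(1, True)] (bword_pow 2 (delta 4 @ delta 4))"
    using bwords_commute_delta_pow[of 4 n] assms by (simp add: numeral_eq_Suc)
  ultimately obtain x where x: "valid_bword n x" "perm_of_bword x = \<pi>"
      "bwords_commute n [(1, True)] (bword_pow 2 x)"
    using extend_bword_commute[OF \<pi>, of "delta 4 @ delta 4" 4] assms by (auto simp: delta_def)
  have "\<pi> ` {1, 2} \<noteq> {1, 2}"
    using assms by (auto simp: doubleton_eq_iff)
  with x show ?thesis
    using not_unique_word_roots_of_commute[of n x \<pi> 2] assms by simp
qed

lemma braid_cong_sigma_sq_identity:
  assumes "3 \<le> n"
  shows "braid_cong n (bword_pow 2 [(1, True), (2, True), (2, True)])
    (bword_pow 2 [(2, True), (2, True), (1, True)])"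
proof -
  let ?a = "(1 :: nat, True)" and ?b = "(2 :: nat, True)"
  have r: "braid_cong n [?a, ?b, ?a] [?b, ?a, ?b]"
    using braid_cong.base[OF braid_rel.braid[of 1 n]] assms by (simp add: numeral_2_eq_2)
  have "braid_cong n [?a, ?b, ?b, ?a, ?b, ?b] [?a, ?b, ?a, ?b, ?a, ?b]"
    using braid_cong.ctxt[OF braid_cong.sym[OF r], of "[?a, ?b]" "[?b]"] by simp
  also have "braid_cong n \<dots> [?b, ?a, ?b, ?b, ?a, ?b]"
    using braid_cong.ctxt[OF r, of "[]" "[?b, ?a, ?b]"] by simp
  also have "braid_cong n \<dots> [?b, ?a, ?b, ?a, ?b, ?a]"
    using braid_cong.ctxt[OF braid_cong.sym[OF r], of "[?b, ?a, ?b]" "[]"] by simp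
  also have "braid_cong n \<dots> [?b, ?b, ?a, ?b, ?b, ?a]"
    using braid_cong.ctxt[OF r, of "[?b]" "[?b, ?a]"] by simp
  finally show ?thesis by (simp add: numeral_2_eq_2)
qed

lemma braid_cong_sigma_sq_swap:
  assumes "3 \<le> n" and w: "\<forall>y\<in>set w. 4 \<le> fst y \<and> fst y < n"
  shows "braid_cong n (bword_pow 2 ((1, True) # w @ [(2, True), (2, True)]))
    (bword_pow 2 ([(2, True), (2, True), (1, True)] @ w))"
proof -
  let ?a = "(1 :: nat, True)" and ?t = "[(2 :: nat, True), (2, True)]"
  have commute_w: "bwords_commute n u w" if "set u \<subseteq> {?a, (2, True)}" for u
  proof (rule bwords_commute_of_letters, intro ballI)
    fix x y assume "x \<in> set u" "y \<in> set w"
    moreover from \<open>x \<in> set u\<close> that obtain i where "x = (i, True)" "i \<in> {1, 2}" by auto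
    ultimately show "bwords_commute n [x] [y]"
      using w \<open>3 \<le> n\<close> by (cases y) (auto intro!: far_letters_commute)
  qed
  have "braid_cong n (?a # w @ ?t) (?a # ?t @ w)"
    using braid_cong.ctxt[of n "w @ ?t" "?t @ w" "[?a]" "[]"] commute_w[of ?t]
    by (simp add: bwords_commute_def braid_cong.sym)
  then have "braid_cong n (bword_pow 2 (?a # w @ ?t)) (bword_pow 2 ((?a # ?t) @ w))"
    by (simp add: braid_cong_bword_pow)
  also have "braid_cong n \<dots> (bword_pow 2 (?a # ?t) @ bword_pow 2 w)"
    by (rule bword_pow_append) (simp add: commute_w)
  also have "braid_cong n \<dots> (bword_pow 2 (?t @ [?a]) @ bword_pow 2 w)"
    using braid_cong_append[OF braid_cong_sigma_sq_identity[OF \<open>3 \<le> n\<close>] braid_cong.refl] by simp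
  also have "braid_cong n \<dots> (bword_pow 2 ((?t @ [?a]) @ w))"
    using braid_cong.sym[OF bword_pow_append[OF commute_w[of "?t @ [?a]"], of 2]] by simp
  finally show ?thesis by simp
qed

text \<open>With \<open>x = \<sigma>\<^sub>1 w\<close>, \<open>w\<close> on strands beyond 3, and \<open>t = \<sigma>\<^sub>2\<^sup>2\<close>, the braids \<open>x t\<close> and \<open>t x\<close> have the
  same square but do not commute.\<close>

lemma not_unique_word_roots_transposition:
  assumes \<pi>: "\<pi> permutes {1..n}" and "3 \<le> n" and "\<pi> 1 = 2" "\<pi> 2 = 1" "\<pi> 3 = 3"
  shows "\<not> unique_word_roots n \<pi>"
proof
  assume roots: "unique_word_roots n \<pi>"
  let ?a = "(1 :: nat, True)" and ?t = "[(2 :: nat, True), (2, True)]"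
  have "{1..3} = {1, 2, 3 :: nat}" by auto
  then have "\<forall>i\<in>{1..3}. \<pi> i = perm_of_bword [?a] i"
    using assms by (simp add: transpose_def)
  then obtain w where w: "\<forall>x\<in>set w. 4 \<le> fst x \<and> fst x < n" and "perm_of_bword ([?a] @ w) = \<pi>"
    using extend_bword[of "[?a]" 3 n \<pi>] assms by auto
  define x where "x = ?a # w"
  have perm_x: "perm_of_bword x = \<pi>" and valid_x: "valid_bword n x"
    using \<open>perm_of_bword ([?a] @ w) = \<pi>\<close> w assms by (auto simp: x_def valid_bword_def)
  have "braid_cong n (bword_pow 2 (x @ ?t)) (bword_pow 2 (?t @ x))"
    using braid_cong_sigma_sq_swap[OF \<open>3 \<le> n\<close> w] by (simp add: x_def)
  then have "braid_cong n (x @ ?t) (?t @ x)"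
    by (rule unique_word_rootsD[OF roots, rotated 5])
      (use valid_x perm_x \<open>3 \<le> n\<close> in \<open>auto simp: fun_eq_iff transpose_def\<close>)
  then have "perm_of_bword x ` {2, 3} = {2, 3}"
    using bwords_commute_sigma_sq_perm[of n 2 x] braid_cong.sym
    by (simp add: bwords_commute_def numeral_3_eq_3)
  then show False
    using perm_x assms by (auto simp: doubleton_eq_iff)
qed

section \<open>Normal forms of permutations up to conjugacy\<close>

lemma permutes_enumerate:
  assumes "distinct as" "set as \<subseteq> {1..n}"
  obtains \<rho> where "\<rho> permutes {1..n}" "\<And>i. i < length as \<Longrightarrow> \<rho> (as ! i) = Suc i"
proof -
  have "\<exists>\<rho>. \<rho> permutes {1..n} \<and> (\<forall>i<length as. \<rho> (as ! i) = Suc i)"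
    using assms
  proof (induction as rule: rev_induct)
    case (snoc x as)
    then obtain \<rho> where \<rho>: "\<rho> permutes {1..n}" "\<forall>i<length as. \<rho> (as ! i) = Suc i"
      by auto
    have "length (as @ [x]) \<le> n"
      using card_mono[OF finite_atLeastAtMost snoc.prems(2)] distinct_card[OF snoc.prems(1)] by simp
    moreover have "\<rho> x \<in> {1..n}"
      using snoc.prems permutes_in_image[OF \<rho>(1)] by auto
    ultimately have permutes: "transpose (Suc (length as)) (\<rho> x) \<circ> \<rho> permutes {1..n}"
      by (intro permutes_compose[OF \<rho>(1)] permutes_swap_id) auto
    have fresh: "\<rho> x \<noteq> Suc i" if "i < length as" for i
    proof
      assume "\<rho> x = Suc i"
      then have "x = as ! i"
        using \<rho> that permutes_inj[OF \<rho>(1)] by (metis injD)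
      then show False using snoc.prems(1) that by auto
    qed
    show ?case
    proof (intro exI[of _ "transpose (Suc (length as)) (\<rho> x) \<circ> \<rho>"] conjI allI impI)
      fix i assume "i < length (as @ [x])"
      then show "(transpose (Suc (length as)) (\<rho> x) \<circ> \<rho>) ((as @ [x]) ! i) = Suc i"
        using \<rho>(2) fresh fresh[THEN not_sym]
        by (cases "i < length as") (auto simp: nth_append transpose_def)
    qed (fact permutes)
  qed (auto intro: permutes_id)
  then show ?thesis using that by blast
qed

lemma permutes_enumerate_conj:
  assumes "distinct as" "set as \<subseteq> {1..n}"
  obtains \<rho> where "\<rho> permutes {1..n}" "\<And>i. i < length as \<Longrightarrow> \<rho> (as ! i) = Suc i"
    "\<And>i. i < length as \<Longrightarrow> perm_conj \<rho> \<tau> (Suc i) = \<rho> (\<tau> (as ! i))"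
proof -
  obtain \<rho> where \<rho>: "\<rho> permutes {1..n}" "\<And>i. i < length as \<Longrightarrow> \<rho> (as ! i) = Suc i"
    using permutes_enumerate[OF assms] by blast
  moreover have "perm_conj \<rho> \<tau> (Suc i) = \<rho> (\<tau> (as ! i))" if "i < length as" for i
  proof -
    have "perm_conj \<rho> \<tau> (\<rho> (as ! i)) = \<rho> (\<tau> (as ! i))"
      by (simp add: permutes_inverses(2)[OF \<rho>(1)])
    then show ?thesis using \<rho>(2)[OF that] by simp
  qed
  ultimately show ?thesis by (rule that)
qed

lemma permutes_orbit:
  fixes \<tau> :: "nat \<Rightarrow> nat"
  assumes \<tau>: "\<tau> permutes {1..n}" and a: "\<tau> (\<tau> a) \<noteq> a"
  obtains k where "3 \<le> k" "(\<tau> ^^ k) a = a" "distinct (map (\<lambda>i. (\<tau> ^^ i) a) [0..<k])"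
    "set (map (\<lambda>i. (\<tau> ^^ i) a) [0..<k]) \<subseteq> {1..n}"
proof -
  have "permutation \<tau>"
    using \<tau> by (auto simp: permutation_permutes)
  then have "a \<in> orbit \<tau> a"
    by (rule permutation_self_in_orbit)
  define k where "k = funpow_dist1 \<tau> a a"
  have period: "(\<tau> ^^ k) a = a"
    unfolding k_def by (rule funpow_dist1_prop) fact
  have "(\<tau> ^^ i) a \<noteq> (\<tau> ^^ i') a" if "i < k" "i' < k" "i \<noteq> i'" for i i'
    using funpow_neq_less_funpow_dist1[OF \<open>a \<in> orbit \<tau> a\<close>] that unfolding k_def by blast
  then have "distinct (map (\<lambda>i. (\<tau> ^^ i) a) [0..<k])"
    by (auto simp: distinct_map inj_on_def) blast
  moreover have "k \<noteq> 1" "k \<noteq> 2"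
    using period a by (auto simp: numeral_2_eq_2)
  then have "3 \<le> k"
    unfolding k_def by (cases "funpow_dist1 \<tau> a a") (auto simp: numeral_3_eq_3 less_Suc_eq)
  moreover have "a \<in> {1..n}"
    using a permutes_not_in[OF \<tau>] by metis
  then have "(\<tau> ^^ i) a \<in> {1..n}" for i
    by (induction i) (use permutes_in_image[OF \<tau>] in auto)
  ultimately show ?thesis
    using period by (intro that) auto
qed

lemma permutes_cycle_normal_form:
  fixes \<tau> :: "nat \<Rightarrow> nat"
  assumes \<tau>: "\<tau> permutes {1..n}" and a: "\<tau> (\<tau> a) \<noteq> a"
  obtains \<rho> k where "\<rho> permutes {1..n}" "3 \<le> k" "k \<le> n"
    "\<And>i. i \<in> {1..<k} \<Longrightarrow> perm_conj \<rho> \<tau> i = Suc i" "perm_conj \<rho> \<tau> k = 1"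
proof -
  obtain k where k: "3 \<le> k" and period: "(\<tau> ^^ k) a = a"
    and distinct: "distinct (map (\<lambda>i. (\<tau> ^^ i) a) [0..<k])"
    and set: "set (map (\<lambda>i. (\<tau> ^^ i) a) [0..<k]) \<subseteq> {1..n}"
    using permutes_orbit[OF \<tau> a] by blast
  have "k \<le> n"
    using card_mono[OF finite_atLeastAtMost set] distinct_card[OF distinct] by simp
  obtain \<rho> where \<rho>: "\<rho> permutes {1..n}" and orbit: "\<And>i. i < k \<Longrightarrow> \<rho> ((\<tau> ^^ i) a) = Suc i"
    and conj: "\<And>i. i < k \<Longrightarrow> perm_conj \<rho> \<tau> (Suc i) = \<rho> ((\<tau> ^^ Suc i) a)"
    using permutes_enumerate_conj[OF distinct set, of \<tau>] by auto
  show ?thesis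
  proof (rule that[OF \<rho> k \<open>k \<le> n\<close>])
    fix i assume "i \<in> {1..<k}"
    then obtain j where "i = Suc j" "Suc j < k" by (cases i) auto
    then show "perm_conj \<rho> \<tau> i = Suc i"
      using conj[of j] orbit[of "Suc j"] by simp
  next
    obtain j where "k = Suc j" using k by (cases k) auto
    then show "perm_conj \<rho> \<tau> k = 1"
      using conj[of j] period orbit[of 0] k by simp
  qed
qed

lemma permutes_transposition_normal_form:
  fixes \<tau> :: "nat \<Rightarrow> nat"
  assumes "distinct [a, b, c]" "set [a, b, c] \<subseteq> {1..n}" "\<tau> a = b" "\<tau> b = a" "\<tau> c = c"
  obtains \<rho> where "\<rho> permutes {1..n}"
    "perm_conj \<rho> \<tau> 1 = 2" "perm_conj \<rho> \<tau> 2 = 1" "perm_conj \<rho> \<tau> 3 = 3"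
proof -
  obtain \<rho> where \<rho>: "\<rho> permutes {1..n}"
    and \<rho>_as: "\<And>i. i < length [a, b, c] \<Longrightarrow> \<rho> ([a, b, c] ! i) = Suc i"
    and conj: "\<And>i. i < length [a, b, c] \<Longrightarrow> perm_conj \<rho> \<tau> (Suc i) = \<rho> (\<tau> ([a, b, c] ! i))"
    using permutes_enumerate_conj[OF assms(1,2), of \<tau>] by auto
  have "\<rho> a = 1" "\<rho> b = 2" "\<rho> c = 3"
    using \<rho>_as[of 0] \<rho>_as[of 1] \<rho>_as[of 2] by (simp_all add: numeral_2_eq_2 numeral_3_eq_3)
  moreover have "perm_conj \<rho> \<tau> 1 = \<rho> b" "perm_conj \<rho> \<tau> 2 = \<rho> a" "perm_conj \<rho> \<tau> 3 = \<rho> c"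
    using conj[of 0] conj[of 1] conj[of 2] assms(3-5) by (simp_all add: numeral_eq_Suc)
  ultimately show ?thesis
    by (intro that[OF \<rho>]) simp_all
qed

lemma permutes_double_transposition_normal_form:
  fixes \<tau> :: "nat \<Rightarrow> nat"
  assumes "distinct [a, c, b, d]" "set [a, c, b, d] \<subseteq> {1..n}"
    "\<tau> a = b" "\<tau> b = a" "\<tau> c = d" "\<tau> d = c"
  obtains \<rho> where "\<rho> permutes {1..n}"
    "perm_conj \<rho> \<tau> 1 = 3" "perm_conj \<rho> \<tau> 2 = 4" "perm_conj \<rho> \<tau> 3 = 1" "perm_conj \<rho> \<tau> 4 = 2"
proof -
  obtain \<rho> where \<rho>: "\<rho> permutes {1..n}"
    and \<rho>_as: "\<And>i. i < length [a, c, b, d] \<Longrightarrow> \<rho> ([a, c, b, d] ! i) = Suc i"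
    and conj: "\<And>i. i < length [a, c, b, d] \<Longrightarrow> perm_conj \<rho> \<tau> (Suc i) = \<rho> (\<tau> ([a, c, b, d] ! i))"
    using permutes_enumerate_conj[OF assms(1,2), of \<tau>] by auto
  have "\<rho> a = 1" "\<rho> c = 2" "\<rho> b = 3" "\<rho> d = 4"
    using \<rho>_as[of 0] \<rho>_as[of 1] \<rho>_as[of 2] \<rho>_as[of 3] by (simp_all add: numeral_2_eq_2 numeral_3_eq_3)
  moreover have "perm_conj \<rho> \<tau> 1 = \<rho> b" "perm_conj \<rho> \<tau> 2 = \<rho> d"
    "perm_conj \<rho> \<tau> 3 = \<rho> a" "perm_conj \<rho> \<tau> 4 = \<rho> c"
    using conj[of 0] conj[of 1] conj[of 2] conj[of 3] assms(3-6) by (simp_all add: numeral_eq_Suc)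
  ultimately show ?thesis
    by (intro that[OF \<rho>]) simp_all
qed

lemma permutes_involution_normal_form:
  fixes \<tau> :: "nat \<Rightarrow> nat"
  assumes \<tau>: "\<tau> permutes {1..n}" and "\<tau> \<noteq> id" and involution: "\<And>x. \<tau> (\<tau> x) = x" and "3 \<le> n"
  obtains \<rho> where "\<rho> permutes {1..n}"
      "perm_conj \<rho> \<tau> 1 = 2" "perm_conj \<rho> \<tau> 2 = 1" "perm_conj \<rho> \<tau> 3 = 3"
  | \<rho> where "\<rho> permutes {1..n}" "4 \<le> n"
      "perm_conj \<rho> \<tau> 1 = 3" "perm_conj \<rho> \<tau> 2 = 4" "perm_conj \<rho> \<tau> 3 = 1" "perm_conj \<rho> \<tau> 4 = 2"
proof -
  obtain a where "\<tau> a \<noteq> a" using \<open>\<tau> \<noteq> id\<close> by (auto simp: fun_eq_iff)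
  define b where "b = \<tau> a"
  have a: "a \<in> {1..n}"
    using permutes_not_in[OF \<tau>] \<open>\<tau> a \<noteq> a\<close> by blast
  have b: "b \<in> {1..n}" "b \<noteq> a" "\<tau> b = a"
    using a \<open>\<tau> a \<noteq> a\<close> permutes_in_image[OF \<tau>] involution by (auto simp: b_def)
  show ?thesis
  proof (cases "\<exists>c\<in>{1..n}. \<tau> c = c")
    case True
    then obtain c where c: "c \<in> {1..n}" "\<tau> c = c" by blast
    then have distinct: "distinct [a, b, c]" and set: "set [a, b, c] \<subseteq> {1..n}"
      using a b \<open>\<tau> a \<noteq> a\<close> by (auto simp: b_def)
    show ?thesis
      using permutes_transposition_normal_form[OF distinct set b_def[symmetric] b(3) c(2)] that(1)
      by blast
  next
    case False
    have "\<exists>c\<in>{1, 2, 3}. c \<noteq> a \<and> c \<noteq> b"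
      by auto
    then obtain c where "c \<in> {1, 2, 3}" "c \<noteq> a" "c \<noteq> b"
      by blast
    then have c: "c \<in> {1..n}" "c \<noteq> a" "c \<noteq> b"
      using \<open>3 \<le> n\<close> by auto
    define d where "d = \<tau> c"
    have d: "d \<in> {1..n}" "d \<noteq> c" "\<tau> d = c"
      using c(1) False permutes_in_image[OF \<tau>, of c] involution[of c] by (auto simp: d_def)
    have "d \<noteq> a" "d \<noteq> b"
      using c involution[of c] b by (auto simp: d_def b_def)
    then have distinct: "distinct [a, c, b, d]" and set: "set [a, c, b, d] \<subseteq> {1..n}"
      using a b c d by auto
    then have "4 \<le> n"
      using card_mono[OF finite_atLeastAtMost set] distinct_card[OF distinct] by simp
    show ?thesis
      using permutes_double_transposition_normal_form[OF distinct set b_def[symmetric] b(3)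
          d_def[symmetric] d(3)] that(2) \<open>4 \<le> n\<close>
      by blast
  qed
qed

lemma not_unique_word_roots_some_conj:
  fixes \<tau> :: "nat \<Rightarrow> nat"
  assumes \<tau>: "\<tau> permutes {1..n}" "\<tau> \<noteq> id" and "3 \<le> n"
  obtains \<rho> where "\<rho> permutes {1..n}" "\<not> unique_word_roots n (perm_conj \<rho> \<tau>)"
proof -
  have conj_permutes: "perm_conj \<rho> \<tau> permutes {1..n}" if "\<rho> permutes {1..n}" for \<rho>
    by (intro permutes_compose permutes_inv \<tau>(1) that)
  show ?thesis
  proof (cases "\<exists>a. \<tau> (\<tau> a) \<noteq> a")
    case True
    then obtain a where "\<tau> (\<tau> a) \<noteq> a" ..
    then show ?thesis
      by (rule permutes_cycle_normal_form[OF \<tau>(1)])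
        (use not_unique_word_roots_cycle[OF conj_permutes] that in blast)
  next
    case False
    then have "\<tau> (\<tau> x) = x" for x by blast
    then show ?thesis
    proof (rule permutes_involution_normal_form[OF \<tau> _ \<open>3 \<le> n\<close>])
      fix \<rho> assume "\<rho> permutes {1..n}"
        "perm_conj \<rho> \<tau> 1 = 2" "perm_conj \<rho> \<tau> 2 = 1" "perm_conj \<rho> \<tau> 3 = 3"
      then show ?thesis
        using not_unique_word_roots_transposition[OF conj_permutes \<open>3 \<le> n\<close>] that by blast
    next
      fix \<rho> assume "\<rho> permutes {1..n}" "4 \<le> n"
        "perm_conj \<rho> \<tau> 1 = 3" "perm_conj \<rho> \<tau> 2 = 4" "perm_conj \<rho> \<tau> 3 = 1" "perm_conj \<rho> \<tau> 4 = 2"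
      then show ?thesis
        using not_unique_word_roots_double_transposition[OF conj_permutes] that by blast
    qed
  qed
qed

theorem theorem1:
  fixes n :: nat and H :: "bword set set"
  assumes "n \<ge> 3"
    and "subgroup H (braid_group n)"
    and "pure_braid_group n \<subseteq> H"
    and "bi_orderable (braid_group n) H"
  shows "H = pure_braid_group n"
proof (rule ccontr)
  assume "H \<noteq> pure_braid_group n"
  then obtain X where "X \<in> H" "X \<notin> pure_braid_group n"
    using assms(3) by blast
  moreover have "X \<in> carrier (braid_group n)"
    using subgroup.mem_carrier[OF assms(2) \<open>X \<in> H\<close>] .
  ultimately obtain w0 where w0: "valid_bword n w0" "braid_class n w0 \<in> H" "perm_of_bword w0 \<noteq> id"
    by (auto simp: carrier_braid_group pure_braid_group_def braid_perm_class)
  obtain \<rho> where "\<rho> permutes {1..n}" "\<not> unique_word_roots n (perm_conj \<rho> (perm_of_bword w0))"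
    using not_unique_word_roots_some_conj[OF perm_of_bword_permutes[OF w0(1)] w0(3) assms(1)] .
  then show False
    using unique_word_roots_conj[OF assms(2-4) w0(1,2)] by blast
qed

end
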